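(* Let $\mathcal L=\langle +,<,0,P\rangle$ with $P$ a unary predicate, and for each $n\in\mathbb N$ let $\mathbb Q_n$ be the $\mathcal L$-structure $(\mathbb Q,+,<,0,\{0,1,\dots,n\})$ (interpreting $P$ as $\{0,\dots,n\}$). Let $\mathcal F$ be a non-principal ultrafilter on $\mathbb N$ and $\mathcal G=\prod_n\mathbb Q_n/\mathcal F$. Then $\mathcal G$ satisfies the scheme DCI but is not o-minimal.
   Context: For an $\mathcal L$-formula $\varphi(v,\bar w)$, $\mathrm{DCI}_\varphi$ is the sentence $\forall\bar w\Big(\big(\exists s\,\forall v<s\,\varphi(v,\bar w)\ \wedge\ \forall v\big(\forall s<v\,\varphi(s,\bar w)\to\exists u>v\,\forall s<u\,\varphi(s,\bar w)\big)\big)\to\forall v\,\varphi(v,\bar w)\Big)$, and DCI is the scheme $\{\mathrm{DCI}_\varphi:\varphi(v,\bar w)\text{ an }\mathcal L\text{-formula}\}$. A linearly ordered structure is o-minimal if every subset definable (with parameters) is a finite union of open intervals and points. *)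

theory Defs
  imports Complex_Main "HOL-Library.FuncSet"
begin

datatype tm = Var nat | Zero | Plus tm tm

datatype fm =
    Eq tm tm
  | Less tm tm
  | Pr tm
  | Neg fm
  | Conj fm fm
  | Disj fm fm
  | Ex nat fm
  | All nat fm

record 'a lstruct =
  carrier :: "'a set"
  add :: "'a \<Rightarrow> 'a \<Rightarrow> 'a"
  lt :: "'a \<Rightarrow> 'a \<Rightarrow> bool"
  zer :: 'a
  pred :: "'a set"

fun eval_tm :: "'a lstruct \<Rightarrow> (nat \<Rightarrow> 'a) \<Rightarrow> tm \<Rightarrow> 'a" where
  "eval_tm M e (Var i) = e i"
| "eval_tm M e Zero = zer M"
| "eval_tm M e (Plus s t) = add M (eval_tm M e s) (eval_tm M e t)"

fun sat :: "'a lstruct \<Rightarrow> (nat \<Rightarrow> 'a) \<Rightarrow> fm \<Rightarrow> bool" where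
  "sat M e (Eq s t) = (eval_tm M e s = eval_tm M e t)"
| "sat M e (Less s t) = lt M (eval_tm M e s) (eval_tm M e t)"
| "sat M e (Pr t) = (eval_tm M e t \<in> pred M)"
| "sat M e (Neg \<phi>) = (\<not> sat M e \<phi>)"
| "sat M e (Conj \<phi> \<psi>) = (sat M e \<phi> \<and> sat M e \<psi>)"
| "sat M e (Disj \<phi> \<psi>) = (sat M e \<phi> \<or> sat M e \<psi>)"
| "sat M e (Ex i \<phi>) = (\<exists>x\<in>carrier M. sat M (e(i := x)) \<phi>)"
| "sat M e (All i \<phi>) = (\<forall>x\<in>carrier M. sat M (e(i := x)) \<phi>)"

text \<open>phi(v, w) with distinguished variable v; the parameters w are the values
  the environment e assigns to the other variables.\<close>
definition satisfies_DCI :: "'a lstruct \<Rightarrow> bool" where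
  "satisfies_DCI M \<longleftrightarrow>
     (\<forall>\<phi> v e. (\<forall>i. e i \<in> carrier M) \<longrightarrow>
        (let \<Phi> = (\<lambda>x. sat M (e(v := x)) \<phi>) in
          ((\<exists>s\<in>carrier M. \<forall>x\<in>carrier M. lt M x s \<longrightarrow> \<Phi> x)
           \<and> (\<forall>x\<in>carrier M. (\<forall>s\<in>carrier M. lt M s x \<longrightarrow> \<Phi> s) \<longrightarrow>
                 (\<exists>u\<in>carrier M. lt M x u \<and> (\<forall>s\<in>carrier M. lt M s u \<longrightarrow> \<Phi> s))))
          \<longrightarrow> (\<forall>x\<in>carrier M. \<Phi> x)))"

definition definable_set :: "'a lstruct \<Rightarrow> 'a set \<Rightarrow> bool" where
  "definable_set M X \<longleftrightarrow>
     (\<exists>\<phi> v e. (\<forall>i. e i \<in> carrier M) \<and> X = {x \<in> carrier M. sat M (e(v := x)) \<phi>})"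

definition open_interval :: "'a lstruct \<Rightarrow> 'a set \<Rightarrow> bool" where
  "open_interval M I \<longleftrightarrow>
     (\<exists>a\<in>carrier M. \<exists>b\<in>carrier M. I = {x \<in> carrier M. lt M a x \<and> lt M x b})
   \<or> (\<exists>a\<in>carrier M. I = {x \<in> carrier M. lt M a x})
   \<or> (\<exists>b\<in>carrier M. I = {x \<in> carrier M. lt M x b})
   \<or> I = carrier M"

definition o_minimal :: "'a lstruct \<Rightarrow> bool" where
  "o_minimal M \<longleftrightarrow>
     (\<forall>X. definable_set M X \<longrightarrow>
        (\<exists>S. finite S \<and> (\<forall>I\<in>S. open_interval M I \<or> (\<exists>a\<in>carrier M. I = {a})) \<and> X = \<Union>S))"

definition nonprincipal_ultrafilter :: "nat set set \<Rightarrow> bool" where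
  "nonprincipal_ultrafilter U \<longleftrightarrow>
     UNIV \<in> U \<and> {} \<notin> U
   \<and> (\<forall>A\<in>U. \<forall>B\<in>U. A \<inter> B \<in> U)
   \<and> (\<forall>A B. A \<in> U \<and> A \<subseteq> B \<longrightarrow> B \<in> U)
   \<and> (\<forall>A. A \<in> U \<or> - A \<in> U)
   \<and> (\<forall>A\<in>U. infinite A)"

definition uprel :: "nat set set \<Rightarrow> (nat \<Rightarrow> 'a lstruct) \<Rightarrow> ((nat \<Rightarrow> 'a) \<times> (nat \<Rightarrow> 'a)) set" where
  "uprel U M = {(f, g). f \<in> Pi UNIV (\<lambda>n. carrier (M n)) \<and> g \<in> Pi UNIV (\<lambda>n. carrier (M n))
                  \<and> {n. f n = g n} \<in> U}"

definition ultraproduct :: "nat set set \<Rightarrow> (nat \<Rightarrow> 'a lstruct) \<Rightarrow> (nat \<Rightarrow> 'a) set lstruct" where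
  "ultraproduct U M =
    \<lparr> carrier = Pi UNIV (\<lambda>n. carrier (M n)) // uprel U M,
      add = (\<lambda>X Y. {h. \<exists>f\<in>X. \<exists>g\<in>Y. (h, \<lambda>n. add (M n) (f n) (g n)) \<in> uprel U M}),
      lt = (\<lambda>X Y. \<exists>f\<in>X. \<exists>g\<in>Y. {n. lt (M n) (f n) (g n)} \<in> U),
      zer = uprel U M `` {\<lambda>n. zer (M n)},
      pred = {X \<in> Pi UNIV (\<lambda>n. carrier (M n)) // uprel U M. \<exists>f\<in>X. {n. f n \<in> pred (M n)} \<in> U} \<rparr>"

definition Qn :: "nat \<Rightarrow> rat lstruct" where
  "Qn n = \<lparr> carrier = UNIV, add = (+), lt = (<), zer = 0, pred = of_nat ` {0..n} \<rparr>"

end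

theory Submission
  imports Defs "HOL-Library.Infinite_Set"
begin

text \<open>
  In \<open>Q\<^sub>n\<close> every formula \<open>\<phi>(v, w)\<close> holds or fails according to the signs of finitely many
  affine functions of its variables: an existential quantifier over \<open>x\<close> can be replaced by a
  finite disjunction over test points built from the zeros of these functions in \<open>x\<close> (the
  point \<open>0\<close>, each zero \<open>\<pm> 1\<close>, and midpoints of two zeros). In one variable, a definable set
  is therefore constant on the finitely many cells cut out by these zeros, so if \<open>\<phi>\<close> holds on
  some \<open>(-\<infinity>, a)\<close> but not everywhere, the set of \<open>x\<close> with \<open>\<phi>\<close> on \<open>(-\<infinity>, x)\<close> has a largest
  element. If \<open>\<phi>\<close> failed somewhere in \<open>G\<close> although it holds on some \<open>(-\<infinity>, a)\<close>, choosing
  this maximum in almost every factor and applying Los's theorem would give an element of \<open>G\<close>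
  below which \<open>\<phi>\<close> holds but with no larger such element, contradicting the second hypothesis
  of \<open>DCI\<^sub>\<phi>\<close>.

  On the other hand \<open>P\<close> is definable in \<open>G\<close> and infinite (it contains the constants
  \<open>0, 1, 2, \<dots>\<close>), but no point \<open>[f]\<close> of \<open>P\<close> has a left neighbourhood inside \<open>P\<close>: below \<open>[f]\<close>
  and above any \<open>[g] < [f]\<close> lies \<open>[max (f - 1/2) ((g + f)/2)]\<close>, which lies strictly between
  \<open>f - 1\<close> and \<open>f\<close> and so is not a natural number wherever \<open>f\<close> is. So \<open>P\<close> is not a finite union of intervals and points.
\<close>

section \<open>Affine functions and semilinear predicates\<close>

inductive affine :: "((nat \<Rightarrow> 'a::field) \<Rightarrow> 'a) \<Rightarrow> bool" where
  affine_const: "affine (\<lambda>e. c)"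
| affine_var: "affine (\<lambda>e. e i)"
| affine_add: "affine \<alpha> \<Longrightarrow> affine \<beta> \<Longrightarrow> affine (\<lambda>e. \<alpha> e + \<beta> e)"
| affine_scale: "affine \<alpha> \<Longrightarrow> affine (\<lambda>e. c * \<alpha> e)"

lemma affine_diff: "affine \<alpha> \<Longrightarrow> affine \<beta> \<Longrightarrow> affine (\<lambda>e. \<alpha> e - \<beta> e)"
  using affine_add[OF _ affine_scale[of \<beta> "-1"]] by simp

lemma affine_divide: "affine \<alpha> \<Longrightarrow> affine (\<lambda>e. \<alpha> e / c)"
  using affine_scale[of \<alpha> "inverse c"] by (simp add: field_simps)

lemma affine_subst: "affine \<alpha> \<Longrightarrow> affine \<tau> \<Longrightarrow> affine (\<lambda>e. \<alpha> (e(i := \<tau> e)))"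
proof (induction rule: affine.induct)
  case (affine_var j)
  then show ?case by (cases "j = i") (auto intro: affine.intros)
qed (auto intro: affine.intros)

definition slope :: "nat \<Rightarrow> ((nat \<Rightarrow> 'a) \<Rightarrow> 'a) \<Rightarrow> 'a::field" where
  "slope i \<alpha> = \<alpha> ((\<lambda>_. 0)(i := 1)) - \<alpha> (\<lambda>_. 0)"

lemma affine_update: "affine \<alpha> \<Longrightarrow> \<alpha> (e(i := x)) = \<alpha> (e(i := 0)) + slope i \<alpha> * x"
proof (induction rule: affine.induct)
  case (affine_scale \<alpha> c)
  have "slope i (\<lambda>e. c * \<alpha> e) = c * slope i \<alpha>"
    by (simp add: slope_def algebra_simps)
  with affine_scale.IH show ?case by (simp add: algebra_simps)
qed (auto simp: slope_def algebra_simps)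

text \<open>For \<open>slope i \<alpha> = 0\<close> division by zero makes \<open>zero_crossing i \<alpha> e = 0\<close>, a harmless
  extra test point.\<close>

definition zero_crossing :: "nat \<Rightarrow> ((nat \<Rightarrow> 'a) \<Rightarrow> 'a) \<Rightarrow> (nat \<Rightarrow> 'a) \<Rightarrow> 'a::field" where
  "zero_crossing i \<alpha> e = - \<alpha> (e(i := 0)) / slope i \<alpha>"

lemma affine_zero_crossing:
  assumes "affine \<alpha>"
  shows "affine (zero_crossing i \<alpha>)"
proof -
  have "affine (\<lambda>e. - inverse (slope i \<alpha>) * \<alpha> (e(i := (\<lambda>_. 0) e)))"
    using affine_scale[OF affine_subst[OF assms affine_const]] .
  moreover have "zero_crossing i \<alpha> = (\<lambda>e. - inverse (slope i \<alpha>) * \<alpha> (e(i := (\<lambda>_. 0) e)))"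
    by (simp add: fun_eq_iff zero_crossing_def divide_inverse)
  ultimately show ?thesis by (simp only:)
qed

definition sign_invariant ::
    "((nat \<Rightarrow> 'a) \<Rightarrow> 'a::linordered_field) list \<Rightarrow> ((nat \<Rightarrow> 'a) \<Rightarrow> bool) \<Rightarrow> bool" where
  "sign_invariant L P \<longleftrightarrow> (\<forall>e e'. (\<forall>\<alpha>\<in>set L. sgn (\<alpha> e) = sgn (\<alpha> e')) \<longrightarrow> P e \<longrightarrow> P e')"

definition semilinear :: "((nat \<Rightarrow> 'a::linordered_field) \<Rightarrow> bool) \<Rightarrow> bool" where
  "semilinear P \<longleftrightarrow> (\<exists>L. (\<forall>\<alpha>\<in>set L. affine \<alpha>) \<and> sign_invariant L P)"

lemma semilinear_sgn_pattern:
  assumes "\<forall>\<alpha>\<in>set L. affine \<alpha>"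
  shows "semilinear (\<lambda>e. S (map (\<lambda>\<alpha>. sgn (\<alpha> e)) L))"
proof -
  have "sign_invariant L (\<lambda>e. S (map (\<lambda>\<alpha>. sgn (\<alpha> e)) L))"
    unfolding sign_invariant_def by (simp cong: map_cong)
  then show ?thesis using assms unfolding semilinear_def by blast
qed

lemma semilinear_Not: "semilinear P \<Longrightarrow> semilinear (\<lambda>e. \<not> P e)"
  unfolding semilinear_def sign_invariant_def by metis

lemma semilinear_conj: "semilinear P \<Longrightarrow> semilinear Q \<Longrightarrow> semilinear (\<lambda>e. P e \<and> Q e)"
  unfolding semilinear_def sign_invariant_def
  by (metis (no_types, lifting) Un_iff set_append)

lemma semilinear_disj: "semilinear P \<Longrightarrow> semilinear Q \<Longrightarrow> semilinear (\<lambda>e. P e \<or> Q e)"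
  using semilinear_conj[of "\<lambda>e. \<not> P e" "\<lambda>e. \<not> Q e"] semilinear_Not by force

definition cut_invariant :: "'a::linordered_field set \<Rightarrow> ('a \<Rightarrow> bool) \<Rightarrow> bool" where
  "cut_invariant R Q \<longleftrightarrow> (\<forall>x y. (\<forall>r\<in>R. sgn (x - r) = sgn (y - r)) \<longrightarrow> Q x \<longrightarrow> Q y)"

lemma cut_invariant_no_root_between:
  assumes "cut_invariant R Q" "Q x" "\<forall>r\<in>R. r < min x y \<or> max x y < r"
  shows "Q y"
proof -
  have "sgn (x - r) = sgn (y - r)" if "r \<in> R" for r
    using assms(3) that by (auto simp: sgn_if)
  then show ?thesis using assms(1,2) unfolding cut_invariant_def by blast
qed

lemma cut_invariant_zero_crossings:
  assumes "\<forall>\<alpha>\<in>set L. affine \<alpha>" "sign_invariant L P"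
  shows "cut_invariant ((\<lambda>\<alpha>. zero_crossing i \<alpha> e) ` set L) (\<lambda>x. P (e(i := x)))"
  unfolding cut_invariant_def
proof (intro allI impI)
  fix x y
  assume same: "\<forall>r\<in>(\<lambda>\<alpha>. zero_crossing i \<alpha> e) ` set L. sgn (x - r) = sgn (y - r)"
    and "P (e(i := x))"
  have "sgn (\<alpha> (e(i := x))) = sgn (\<alpha> (e(i := y)))" if "\<alpha> \<in> set L" for \<alpha>
  proof (cases "slope i \<alpha> = 0")
    case True
    then have "\<alpha> (e(i := x)) = \<alpha> (e(i := y))"
      using affine_update[of \<alpha> e i x] affine_update[of \<alpha> e i y] assms(1) that by simp
    then show ?thesis by simp
  next
    case False
    have "\<alpha> (e(i := z)) = slope i \<alpha> * (z - zero_crossing i \<alpha> e)" for z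
      using affine_update[of \<alpha> e i z] assms(1) that False
      by (simp add: zero_crossing_def field_simps)
    then show ?thesis using same that by (simp add: sgn_mult)
  qed
  then show "P (e(i := y))" using assms(2) \<open>P (e(i := x))\<close> unfolding sign_invariant_def by blast
qed

text \<open>One point in every cell: \<open>0\<close> if \<open>R = {}\<close>, \<open>min R - 1\<close> and \<open>max R + 1\<close> for the unbounded
  cells, \<open>(r + r) / 2 = r\<close> for the points of \<open>R\<close> and midpoints of neighbours for the bounded
  open cells.\<close>

definition test_points :: "'a::linordered_field set \<Rightarrow> 'a set" where
  "test_points R =
     {0} \<union> {r - 1 |r. r \<in> R} \<union> {r + 1 |r. r \<in> R} \<union> {(r + s) / 2 |r s. r \<in> R \<and> s \<in> R}"

lemma cut_invariant_midpoint:
  assumes "cut_invariant R Q" "Q x" "l < x" "x < u" "\<forall>r\<in>R. r \<le> l \<or> u \<le> r"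
  shows "Q ((l + u) / 2)"
proof -
  have "l < (l + u) / 2" "(l + u) / 2 < u" using assms(3,4) by auto
  then have "\<forall>r\<in>R. r < min x ((l + u) / 2) \<or> max x ((l + u) / 2) < r"
    using assms(3-5) by force
  then show ?thesis using cut_invariant_no_root_between assms(1,2) by blast
qed

lemma cut_invariant_test_point:
  assumes "finite R" "cut_invariant R Q" "Q x"
  shows "\<exists>t\<in>test_points R. Q t"
proof -
  have Q: "Q t" if "\<forall>r\<in>R. r < min x t \<or> max x t < r" for t
    using cut_invariant_no_root_between assms(2,3) that by blast
  consider "R = {}" | "x \<in> R" | "R \<noteq> {}" "\<forall>r\<in>R. x < r" | "R \<noteq> {}" "\<forall>r\<in>R. r < x"
    | "\<exists>r\<in>R. r < x" "\<exists>r\<in>R. x < r" "x \<notin> R"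
    by (metis linorder_neqE)
  then show ?thesis
  proof cases
    case 1
    then show ?thesis using Q[of 0] by (simp add: test_points_def)
  next
    case 2
    then have "(x + x) / 2 \<in> test_points R"
      unfolding test_points_def by blast
    then show ?thesis using assms(3) by auto
  next
    case 3
    then have "Min R \<in> R" "\<forall>r\<in>R. Min R \<le> r" using assms(1) by auto
    then have "Q (Min R - 1)" "Min R - 1 \<in> test_points R"
      using 3 by (auto intro!: Q simp: test_points_def)
    then show ?thesis by blast
  next
    case 4
    then have "Max R \<in> R" "\<forall>r\<in>R. r \<le> Max R" using assms(1) by auto
    then have "Q (Max R + 1)" "Max R + 1 \<in> test_points R"
      using 4 by (auto intro!: Q simp: test_points_def)
    then show ?thesis by blast
  next
    case 5
    define l where "l = Max {r\<in>R. r < x}"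
    define u where "u = Min {r\<in>R. x < r}"
    have "finite {r\<in>R. r < x}" "{r\<in>R. r < x} \<noteq> {}" using 5 assms(1) by auto
    from Max_in[OF this] Max_ge[OF this(1)]
    have l: "l \<in> R" "l < x" "\<forall>r\<in>R. r < x \<longrightarrow> r \<le> l" unfolding l_def by auto
    have "finite {r\<in>R. x < r}" "{r\<in>R. x < r} \<noteq> {}" using 5 assms(1) by auto
    from Min_in[OF this] Min_le[OF this(1)]
    have u: "u \<in> R" "x < u" "\<forall>r\<in>R. x < r \<longrightarrow> u \<le> r" unfolding u_def by auto
    have "\<forall>r\<in>R. r \<le> l \<or> u \<le> r" using l(3) u(3) 5(3) by (metis linorder_neqE)
    then have "Q ((l + u) / 2)" using cut_invariant_midpoint assms(2,3) l(2) u(2) by blast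
    moreover have "(l + u) / 2 \<in> test_points R"
      using l(1) u(1) unfolding test_points_def by blast
    ultimately show ?thesis by blast
  qed
qed

lemma cut_invariant_initial_segment_max:
  assumes "finite R" "cut_invariant R Q" "\<forall>y<a. Q y" "\<not> Q b"
  shows "\<exists>m. (\<forall>y<m. Q y) \<and> (\<forall>x. (\<forall>y<x. Q y) \<longrightarrow> x \<le> m)"
proof -
  define M where "M = insert a {r\<in>R. \<forall>y<r. Q y}"
  define m where "m = Max M"
  have "finite M" "M \<noteq> {}" using assms(1) unfolding M_def by auto
  then have "m \<in> M" "\<forall>r\<in>M. r \<le> m" unfolding m_def by auto
  then have below_m: "\<forall>y<m. Q y" using assms(3) unfolding M_def by auto
  have "x \<le> m" if x: "\<forall>y<x. Q y" for x
  proof (rule ccontr)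
    assume "\<not> x \<le> m"
    define w where "w = (m + x) / 2"
    have w: "m < w" "w < x" using \<open>\<not> x \<le> m\<close> unfolding w_def by auto
    have root_above_m: "\<exists>r\<in>R. m < r \<and> r \<le> z" if "\<not> Q z" for z
    proof (rule ccontr)
      assume none: "\<not> (\<exists>r\<in>R. m < r \<and> r \<le> z)"
      have "x \<le> z" using x that not_less by blast
      then have "\<forall>r\<in>R. r < min w z \<or> max w z < r" using none w by force
      then show False using cut_invariant_no_root_between[OF assms(2)] x w that by blast
    qed
    define r0 where "r0 = Min {r\<in>R. m < r}"
    have "finite {r\<in>R. m < r}" "{r\<in>R. m < r} \<noteq> {}"
      using root_above_m[OF assms(4)] assms(1) by auto
    from Min_in[OF this] Min_le[OF this(1)]
    have r0: "r0 \<in> R" "m < r0" "\<forall>r\<in>R. m < r \<longrightarrow> r0 \<le> r" unfolding r0_def by auto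
    have "Q y" if "y < r0" for y
      using root_above_m[of y] x r0(3) that by force
    then have "r0 \<in> M" using r0(1) unfolding M_def by blast
    then show False using \<open>\<forall>r\<in>M. r \<le> m\<close> r0(2) by force
  qed
  then show ?thesis using below_m by blast
qed

section \<open>Quantifier elimination in \<open>Q\<^sub>n\<close>\<close>

definition test_terms ::
    "nat \<Rightarrow> ((nat \<Rightarrow> 'a) \<Rightarrow> 'a) list \<Rightarrow> ((nat \<Rightarrow> 'a) \<Rightarrow> 'a::field) list" where
  "test_terms i L = (\<lambda>_. 0) #
     map (\<lambda>\<alpha> e. zero_crossing i \<alpha> e - 1) L @ map (\<lambda>\<alpha> e. zero_crossing i \<alpha> e + 1) L @
     concat (map (\<lambda>\<alpha>. map (\<lambda>\<beta> e. (zero_crossing i \<alpha> e + zero_crossing i \<beta> e) / 2) L) L)"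

lemma affine_test_terms:
  assumes "\<forall>\<alpha>\<in>set L. affine \<alpha>" "\<tau> \<in> set (test_terms i L)"
  shows "affine \<tau>"
proof -
  have "affine (zero_crossing i \<alpha>)" if "\<alpha> \<in> set L" for \<alpha>
    using assms(1) that by (simp add: affine_zero_crossing)
  then show ?thesis
    using assms(2) unfolding test_terms_def
    by (auto intro!: affine_divide[OF affine_add] affine_diff[OF _ affine_const]
        affine_add[OF _ affine_const] affine_const)
qed

lemma test_points_zero_crossings:
  assumes "t \<in> test_points ((\<lambda>\<alpha>. zero_crossing i \<alpha> e) ` set L)"
  shows "\<exists>\<tau>\<in>set (test_terms i L). t = \<tau> e"
proof -
  from assms consider "t = 0"
    | \<alpha> where "\<alpha> \<in> set L" "t = zero_crossing i \<alpha> e - 1"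
    | \<alpha> where "\<alpha> \<in> set L" "t = zero_crossing i \<alpha> e + 1"
    | \<alpha> \<beta> where "\<alpha> \<in> set L" "\<beta> \<in> set L"
        "t = (zero_crossing i \<alpha> e + zero_crossing i \<beta> e) / 2"
    unfolding test_points_def by blast
  then show ?thesis
  proof cases
    case 1
    then show ?thesis by (intro bexI[of _ "\<lambda>_. 0"]) (simp_all add: test_terms_def)
  next
    case 2
    then show ?thesis
      by (intro bexI[of _ "\<lambda>e. zero_crossing i \<alpha> e - 1"]) (simp_all add: test_terms_def)
  next
    case 3
    then show ?thesis
      by (intro bexI[of _ "\<lambda>e. zero_crossing i \<alpha> e + 1"]) (simp_all add: test_terms_def)
  next
    case 4
    then show ?thesis
      by (intro bexI[of _ "\<lambda>e. (zero_crossing i \<alpha> e + zero_crossing i \<beta> e) / 2"])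
        (auto simp: test_terms_def)
  qed
qed

lemma semilinear_Ex:
  assumes "semilinear P"
  shows "semilinear (\<lambda>e. \<exists>x. P (e(i := x)))"
proof -
  obtain L where aff: "\<forall>\<alpha>\<in>set L. affine \<alpha>" and inv: "sign_invariant L P"
    using assms unfolding semilinear_def by blast
  define L' where "L' = [(\<lambda>e. \<alpha> (e(i := \<tau> e))). \<tau> \<leftarrow> test_terms i L, \<alpha> \<leftarrow> L]"
  have "\<forall>\<alpha>\<in>set L'. affine \<alpha>"
    unfolding L'_def using aff affine_test_terms[OF aff] by (auto intro: affine_subst)
  moreover have "sign_invariant L' (\<lambda>e. \<exists>x. P (e(i := x)))"
    unfolding sign_invariant_def
  proof (intro allI impI)
    fix e e'
    assume same: "\<forall>\<alpha>\<in>set L'. sgn (\<alpha> e) = sgn (\<alpha> e')" and "\<exists>x. P (e(i := x))"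
    then obtain t where "t \<in> test_points ((\<lambda>\<alpha>. zero_crossing i \<alpha> e) ` set L)" "P (e(i := t))"
      using cut_invariant_test_point[OF _ cut_invariant_zero_crossings[OF aff inv]] by blast
    then obtain \<tau> where \<tau>: "\<tau> \<in> set (test_terms i L)" "P (e(i := \<tau> e))"
      using test_points_zero_crossings by blast
    have "sgn (\<alpha> (e(i := \<tau> e))) = sgn (\<alpha> (e'(i := \<tau> e')))" if "\<alpha> \<in> set L" for \<alpha>
      using same \<tau>(1) that unfolding L'_def by auto
    then have "P (e'(i := \<tau> e'))" using inv \<tau>(2) unfolding sign_invariant_def by blast
    then show "\<exists>x. P (e'(i := x))" by blast
  qed
  ultimately show ?thesis unfolding semilinear_def by blast
qed

lemma semilinear_All: "semilinear P \<Longrightarrow> semilinear (\<lambda>e. \<forall>x. P (e(i := x)))"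
  using semilinear_Not[OF semilinear_Ex[OF semilinear_Not, of P i]] by simp

lemma Qn_simps [simp]:
  "carrier (Qn n) = UNIV" "add (Qn n) = (+)" "lt (Qn n) = (<)" "zer (Qn n) = 0"
  "pred (Qn n) = of_nat ` {0..n}"
  by (simp_all add: Qn_def)

lemma affine_eval_tm_Qn: "affine (\<lambda>e. eval_tm (Qn n) e t)"
  by (induction t) (auto intro: affine.intros)

lemma semilinear_sat_Qn: "semilinear (\<lambda>e. sat (Qn n) e \<phi>)"
proof (induction \<phi>)
  case (Eq s t)
  let ?d = "\<lambda>e. eval_tm (Qn n) e s - eval_tm (Qn n) e t"
  show ?case
    using semilinear_sgn_pattern[of "[?d]" "\<lambda>S. hd S = 0"]
    by (simp add: affine_diff affine_eval_tm_Qn sgn_0_0)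
next
  case (Less s t)
  let ?d = "\<lambda>e. eval_tm (Qn n) e s - eval_tm (Qn n) e t"
  show ?case
    using semilinear_sgn_pattern[of "[?d]" "\<lambda>S. hd S = -1"]
    by (simp add: affine_diff affine_eval_tm_Qn sgn_1_neg)
next
  case (Pr t)
  let ?L = "map (\<lambda>k e. eval_tm (Qn n) e t - of_nat k) [0..<Suc n]"
  have "\<forall>\<alpha>\<in>set ?L. affine \<alpha>"
    by (auto intro: affine_diff affine_eval_tm_Qn affine_const)
  moreover have "sat (Qn n) e (Pr t) \<longleftrightarrow> 0 \<in> set (map (\<lambda>\<alpha>. sgn (\<alpha> e)) ?L)" for e
    by (auto simp del: upt_Suc simp: image_iff sgn_0_0 atLeastLessThanSuc_atLeastAtMost)
  ultimately show ?case using semilinear_sgn_pattern[of ?L "\<lambda>S. 0 \<in> set S"] by (simp only:)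
next
  case (Neg \<phi>)
  then show ?case using semilinear_Not by fastforce
next
  case (Conj \<phi> \<psi>)
  then show ?case using semilinear_conj by fastforce
next
  case (Disj \<phi> \<psi>)
  then show ?case using semilinear_disj by fastforce
next
  case (Ex i \<phi>)
  then show ?case using semilinear_Ex[of "\<lambda>e. sat (Qn n) e \<phi>" i] by simp
next
  case (All i \<phi>)
  then show ?case using semilinear_All[of "\<lambda>e. sat (Qn n) e \<phi>" i] by simp
qed

text \<open>The quantifiers range over the whole type, so this is meant for structures with carrier
  \<open>UNIV\<close>.\<close>

definition definable_cuts_have_max :: "'a lstruct \<Rightarrow> bool" where
  "definable_cuts_have_max M \<longleftrightarrow>
     (\<forall>\<phi> v e a b. (\<forall>y. lt M y a \<longrightarrow> sat M (e(v := y)) \<phi>) \<and> \<not> sat M (e(v := b)) \<phi> \<longrightarrow>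
        (\<exists>m. (\<forall>y. lt M y m \<longrightarrow> sat M (e(v := y)) \<phi>) \<and>
             (\<forall>x. (\<forall>y. lt M y x \<longrightarrow> sat M (e(v := y)) \<phi>) \<longrightarrow> \<not> lt M m x)))"

lemma definable_cuts_have_max_Qn: "definable_cuts_have_max (Qn n)"
  unfolding definable_cuts_have_max_def
proof (intro allI impI, elim conjE)
  fix \<phi> v e a b
  assume "\<forall>y. lt (Qn n) y a \<longrightarrow> sat (Qn n) (e(v := y)) \<phi>" "\<not> sat (Qn n) (e(v := b)) \<phi>"
  moreover obtain L where "\<forall>\<alpha>\<in>set L. affine \<alpha>" "sign_invariant L (\<lambda>e. sat (Qn n) e \<phi>)"
    using semilinear_sat_Qn unfolding semilinear_def by blast
  then have "cut_invariant ((\<lambda>\<alpha>. zero_crossing v \<alpha> e) ` set L)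
      (\<lambda>x. sat (Qn n) (e(v := x)) \<phi>)"
    by (rule cut_invariant_zero_crossings)
  ultimately show "\<exists>m. (\<forall>y. lt (Qn n) y m \<longrightarrow> sat (Qn n) (e(v := y)) \<phi>) \<and>
      (\<forall>x. (\<forall>y. lt (Qn n) y x \<longrightarrow> sat (Qn n) (e(v := y)) \<phi>) \<longrightarrow> \<not> lt (Qn n) m x)"
    using cut_invariant_initial_segment_max[OF finite_imageI[OF finite_set]]
    by (simp add: not_less)
qed

section \<open>Ultraproducts and Los's theorem\<close>

locale nonprincipal_uf =
  fixes F :: "nat set set"
  assumes nonprincipal_uf: "nonprincipal_ultrafilter F"
begin

lemma uf_UNIV: "UNIV \<in> F"
  using nonprincipal_uf unfolding nonprincipal_ultrafilter_def by simp

lemma uf_empty: "{} \<notin> F"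
  using nonprincipal_uf unfolding nonprincipal_ultrafilter_def by simp

lemma uf_Int: "A \<in> F \<Longrightarrow> B \<in> F \<Longrightarrow> A \<inter> B \<in> F"
  using nonprincipal_uf unfolding nonprincipal_ultrafilter_def by simp

lemma uf_mono: "A \<in> F \<Longrightarrow> A \<subseteq> B \<Longrightarrow> B \<in> F"
  using nonprincipal_uf unfolding nonprincipal_ultrafilter_def by simp

lemma uf_or_Compl: "A \<in> F \<or> - A \<in> F"
  using nonprincipal_uf unfolding nonprincipal_ultrafilter_def by simp

lemma uf_infinite: "A \<in> F \<Longrightarrow> infinite A"
  using nonprincipal_uf unfolding nonprincipal_ultrafilter_def by simp

lemma uf_Int_iff: "A \<inter> B \<in> F \<longleftrightarrow> A \<in> F \<and> B \<in> F"
  using uf_Int uf_mono by blast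

lemma uf_Compl_iff: "- A \<in> F \<longleftrightarrow> A \<notin> F"
  using uf_Int[of A "- A"] uf_empty uf_or_Compl by auto

lemma uf_nonempty: "A \<in> F \<Longrightarrow> \<exists>n. n \<in> A"
  using uf_empty by (metis ex_in_conv)

lemma uf_cofinite: "finite A \<Longrightarrow> - A \<in> F"
  using uf_infinite uf_or_Compl by auto

lemma uf_conj: "{n. P n \<and> Q n} \<in> F \<longleftrightarrow> {n. P n} \<in> F \<and> {n. Q n} \<in> F"
  by (simp add: Collect_conj_eq uf_Int_iff)

lemma uf_neg: "{n. \<not> P n} \<in> F \<longleftrightarrow> {n. P n} \<notin> F"
  by (simp add: Collect_neg_eq uf_Compl_iff)

lemma uf_disj: "{n. P n \<or> Q n} \<in> F \<longleftrightarrow> {n. P n} \<in> F \<or> {n. Q n} \<in> F"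
  using uf_conj[of "\<lambda>n. \<not> P n" "\<lambda>n. \<not> Q n"] uf_neg[of "\<lambda>n. P n \<or> Q n"]
    uf_neg[of P] uf_neg[of Q]
  by auto

lemma uf_imp: "{n. P n \<longrightarrow> Q n} \<in> F \<longleftrightarrow> ({n. P n} \<in> F \<longrightarrow> {n. Q n} \<in> F)"
  using uf_disj[of "\<lambda>n. \<not> P n" Q] uf_neg[of P] by simp

lemma uf_Collect_mono: "{n. P n} \<in> F \<Longrightarrow> (\<And>n. P n \<Longrightarrow> Q n) \<Longrightarrow> {n. Q n} \<in> F"
  by (erule uf_mono) blast

lemma uf_Collect_mono2:
  "{n. P n} \<in> F \<Longrightarrow> {n. Q n} \<in> F \<Longrightarrow> (\<And>n. P n \<Longrightarrow> Q n \<Longrightarrow> R n) \<Longrightarrow> {n. R n} \<in> F"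
proof -
  assume "{n. P n} \<in> F" "{n. Q n} \<in> F" and R: "\<And>n. P n \<Longrightarrow> Q n \<Longrightarrow> R n"
  then have "{n. P n \<and> Q n} \<in> F" by (simp add: uf_conj)
  then show "{n. R n} \<in> F" by (rule uf_Collect_mono) (simp add: R)
qed

lemma uf_ex_choice: "(\<exists>h. {n. P n (h n)} \<in> F) \<longleftrightarrow> {n. \<exists>y. P n y} \<in> F"
proof
  assume "{n. \<exists>y. P n y} \<in> F"
  then have "{n. P n (SOME y. P n y)} \<in> F" by (rule uf_mono) (auto intro: someI)
  then show "\<exists>h. {n. P n (h n)} \<in> F" by (rule exI[of _ "\<lambda>n. SOME y. P n y"])
qed (auto elim: uf_mono)

lemma uf_all_choice: "(\<forall>h. {n. P n (h n)} \<in> F) \<longleftrightarrow> {n. \<forall>y. P n y} \<in> F"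
proof -
  have "(\<exists>h. {n. P n (h n)} \<notin> F) \<longleftrightarrow> {n. \<forall>y. P n y} \<notin> F"
    using uf_ex_choice[of "\<lambda>n y. \<not> P n y"] uf_neg[of "\<lambda>n. \<forall>y. P n y"] by (simp add: uf_neg)
  then show ?thesis by blast
qed

end

locale full_ultraproduct = nonprincipal_uf F for F +
  fixes M :: "nat \<Rightarrow> 'a lstruct"
  assumes carrier_full: "carrier (M n) = UNIV"
begin

abbreviation G :: "(nat \<Rightarrow> 'a) set lstruct" where
  "G \<equiv> ultraproduct F M"

definition cls :: "(nat \<Rightarrow> 'a) \<Rightarrow> (nat \<Rightarrow> 'a) set" where
  "cls f = uprel F M `` {f}"

lemma uprel_eq: "uprel F M = {(f, g). {n. f n = g n} \<in> F}"
  unfolding uprel_def by (auto simp: carrier_full)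

lemma equiv_uprel: "equiv UNIV (uprel F M)"
proof (rule equivI)
  show "refl (uprel F M)"
    using uf_UNIV unfolding uprel_eq refl_on_def by simp
  show "sym (uprel F M)"
    unfolding uprel_eq sym_def by (auto simp: eq_commute)
  show "trans (uprel F M)"
    unfolding uprel_eq trans_def by (auto elim: uf_Collect_mono2)
qed simp

lemma carrier_G: "carrier G = range cls"
  unfolding ultraproduct_def cls_def quotient_def by (auto simp: carrier_full)

lemma mem_cls: "h \<in> cls f \<longleftrightarrow> {n. f n = h n} \<in> F"
  unfolding cls_def uprel_eq by simp

lemma cls_eq_iff: "cls f = cls g \<longleftrightarrow> {n. f n = g n} \<in> F"
  unfolding cls_def using eq_equiv_class_iff[OF equiv_uprel] by (simp add: uprel_eq)

lemma cls_self: "f \<in> cls f"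
  using equiv_class_self[OF equiv_uprel] unfolding cls_def by simp

lemma cls_respects:
  assumes "f' \<in> cls f" "{n. P n (f' n)} \<in> F"
  shows "{n. P n (f n)} \<in> F"
  using assms unfolding mem_cls by (auto elim: uf_Collect_mono2)

lemma lt_cls: "lt G (cls f) (cls g) \<longleftrightarrow> {n. lt (M n) (f n) (g n)} \<in> F"
proof
  assume "lt G (cls f) (cls g)"
  then obtain f' g' where "f' \<in> cls f" "g' \<in> cls g" "{n. lt (M n) (f' n) (g' n)} \<in> F"
    unfolding ultraproduct_def by auto
  then show "{n. lt (M n) (f n) (g n)} \<in> F"
    using cls_respects[where P = "\<lambda>n x. lt (M n) x (g' n)"]
      cls_respects[where P = "\<lambda>n x. lt (M n) (f n) x"] by blast
qed (auto simp: ultraproduct_def intro: cls_self)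

lemma add_cls: "add G (cls f) (cls g) = cls (\<lambda>n. add (M n) (f n) (g n))"
proof (rule set_eqI)
  fix h
  have "h \<in> add G (cls f) (cls g) \<longleftrightarrow>
        (\<exists>f'\<in>cls f. \<exists>g'\<in>cls g. {n. h n = add (M n) (f' n) (g' n)} \<in> F)"
    unfolding ultraproduct_def uprel_eq by simp
  also have "\<dots> \<longleftrightarrow> {n. h n = add (M n) (f n) (g n)} \<in> F"
  proof
    assume "\<exists>f'\<in>cls f. \<exists>g'\<in>cls g. {n. h n = add (M n) (f' n) (g' n)} \<in> F"
    then obtain f' g' where fg: "f' \<in> cls f" "g' \<in> cls g"
      and "{n. h n = add (M n) (f' n) (g' n)} \<in> F" by blast
    then have "{n. h n = add (M n) (f n) (g' n)} \<in> F"
      using cls_respects[where P = "\<lambda>n x. h n = add (M n) x (g' n)"] by blast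
    then show "{n. h n = add (M n) (f n) (g n)} \<in> F"
      using fg cls_respects[where P = "\<lambda>n x. h n = add (M n) (f n) x"] by blast
  qed (use cls_self in blast)
  also have "\<dots> \<longleftrightarrow> h \<in> cls (\<lambda>n. add (M n) (f n) (g n))"
    unfolding mem_cls by (simp add: eq_commute)
  finally show "h \<in> add G (cls f) (cls g) \<longleftrightarrow> h \<in> cls (\<lambda>n. add (M n) (f n) (g n))" .
qed

lemma zer_G: "zer G = cls (\<lambda>n. zer (M n))"
  unfolding ultraproduct_def cls_def by simp

lemma pred_cls: "cls f \<in> pred G \<longleftrightarrow> {n. f n \<in> pred (M n)} \<in> F"
proof
  assume "cls f \<in> pred G"
  then obtain f' where "f' \<in> cls f" "{n. f' n \<in> pred (M n)} \<in> F"
    unfolding ultraproduct_def by auto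
  then show "{n. f n \<in> pred (M n)} \<in> F"
    using cls_respects[where P = "\<lambda>n x. x \<in> pred (M n)"] by blast
next
  assume "{n. f n \<in> pred (M n)} \<in> F"
  moreover have "cls f \<in> carrier G" by (simp add: carrier_G)
  ultimately show "cls f \<in> pred G" using cls_self unfolding ultraproduct_def by auto
qed

lemma pred_G_subset: "pred G \<subseteq> carrier G"
  unfolding ultraproduct_def by auto

lemma eval_tm_cls:
  "eval_tm G (\<lambda>i. cls (e i)) t = cls (\<lambda>n. eval_tm (M n) (\<lambda>i. e i n) t)"
  by (induction t) (simp_all add: zer_G add_cls)

lemma update_cls:
  "(\<lambda>i. cls (e i))(v := cls h) = (\<lambda>i. cls ((e(v := h)) i))"
  "(\<lambda>i. (e(v := h)) i n) = (\<lambda>i. e i n)(v := h n)"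
  by (simp_all add: fun_eq_iff)

lemma Los: "sat G (\<lambda>i. cls (e i)) \<phi> \<longleftrightarrow> {n. sat (M n) (\<lambda>i. e i n) \<phi>} \<in> F"
proof (induction \<phi> arbitrary: e)
  case (Ex i \<phi>)
  show ?case
    using uf_ex_choice[of "\<lambda>n x. sat (M n) ((\<lambda>j. e j n)(i := x)) \<phi>"]
    by (simp add: carrier_G carrier_full update_cls Ex.IH del: fun_upd_apply)
next
  case (All i \<phi>)
  show ?case
    using uf_all_choice[of "\<lambda>n x. sat (M n) ((\<lambda>j. e j n)(i := x)) \<phi>"]
    by (simp add: carrier_G carrier_full update_cls All.IH del: fun_upd_apply)
qed (simp_all add: eval_tm_cls cls_eq_iff lt_cls pred_cls uf_neg uf_conj uf_disj)

lemma Los_update: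
  "sat G ((\<lambda>i. cls (e i))(v := cls h)) \<phi> \<longleftrightarrow>
   {n. sat (M n) ((\<lambda>i. e i n)(v := h n)) \<phi>} \<in> F"
  by (simp add: update_cls Los del: fun_upd_apply)

lemma initial_segment_cls:
  "(\<forall>X\<in>carrier G. lt G X (cls g) \<longrightarrow> sat G ((\<lambda>i. cls (e i))(v := X)) \<phi>) \<longleftrightarrow>
   {n. \<forall>y. lt (M n) y (g n) \<longrightarrow> sat (M n) ((\<lambda>i. e i n)(v := y)) \<phi>} \<in> F"
  by (simp add: carrier_G lt_cls Los_update uf_imp[symmetric]
      uf_all_choice[of "\<lambda>n y. lt (M n) y (g n) \<longrightarrow> sat (M n) ((\<lambda>i. e i n)(v := y)) \<phi>"])

lemma satisfies_DCI_ultraproduct: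
  assumes "\<And>n. definable_cuts_have_max (M n)"
  shows "satisfies_DCI G"
  unfolding satisfies_DCI_def Let_def
proof (intro allI impI, elim conjE)
  fix \<phi> :: fm and v :: nat and E :: "nat \<Rightarrow> (nat \<Rightarrow> 'a) set"
  assume "\<forall>i. E i \<in> carrier G"
  then have "\<forall>i. \<exists>f. E i = cls f" by (auto simp: carrier_G)
  from choice[OF this] obtain e where "\<forall>i. E i = cls (e i)" by blast
  then have E: "E = (\<lambda>i. cls (e i))" by auto
  define P where "P n y \<longleftrightarrow> sat (M n) ((\<lambda>i. e i n)(v := y)) \<phi>" for n y
  define good where "good g \<longleftrightarrow> {n. \<forall>y. lt (M n) y (g n) \<longrightarrow> P n y} \<in> F" for g
  define is_max where "is_max n m \<longleftrightarrow> (\<forall>y. lt (M n) y m \<longrightarrow> P n y) \<and>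
    (\<forall>x. (\<forall>y. lt (M n) y x \<longrightarrow> P n y) \<longrightarrow> \<not> lt (M n) m x)" for n m
  have sat_cls: "sat G (E(v := cls h)) \<phi> \<longleftrightarrow> {n. P n (h n)} \<in> F" for h
    unfolding E P_def by (rule Los_update)
  have good: "(\<forall>X\<in>carrier G. lt G X (cls g) \<longrightarrow> sat G (E(v := X)) \<phi>) \<longleftrightarrow> good g" for g
    unfolding E good_def P_def by (rule initial_segment_cls)
  have max: "\<exists>m. is_max n m" if "\<forall>y. lt (M n) y a \<longrightarrow> P n y" "\<not> P n b" for n a b
    using assms[of n] that unfolding definable_cuts_have_max_def is_max_def P_def by blast
  assume below: "\<exists>s\<in>carrier G. \<forall>X\<in>carrier G. lt G X s \<longrightarrow> sat G (E(v := X)) \<phi>"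
    and step: "\<forall>x\<in>carrier G. (\<forall>s\<in>carrier G. lt G s x \<longrightarrow> sat G (E(v := s)) \<phi>) \<longrightarrow>
      (\<exists>u\<in>carrier G. lt G x u \<and> (\<forall>s\<in>carrier G. lt G s u \<longrightarrow> sat G (E(v := s)) \<phi>))"
  show "\<forall>X\<in>carrier G. sat G (E(v := X)) \<phi>"
  proof (rule ccontr)
    assume "\<not> (\<forall>X\<in>carrier G. sat G (E(v := X)) \<phi>)"
    then obtain f where "{n. \<not> P n (f n)} \<in> F"
      unfolding carrier_G by (auto simp: sat_cls uf_neg)
    moreover obtain g where "good g"
      using below good unfolding carrier_G by auto
    ultimately have "{n. \<exists>m. is_max n m} \<in> F"
      unfolding good_def by (rule uf_Collect_mono2) (use max in blast)
    then obtain r where r: "{n. is_max n (r n)} \<in> F"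
      using uf_ex_choice[of is_max] by blast
    then have "good r" unfolding good_def is_max_def by (auto elim: uf_Collect_mono)
    then obtain u where "lt G (cls r) (cls u)" "good u"
      using step good unfolding carrier_G by auto
    then have "{n. lt (M n) (r n) (u n) \<and> (\<forall>y. lt (M n) y (u n) \<longrightarrow> P n y)} \<in> F"
      unfolding good_def by (simp add: lt_cls uf_conj)
    with r have "{n. False} \<in> F" by (rule uf_Collect_mono2) (auto simp: is_max_def)
    then show False using uf_empty by simp
  qed
qed

end

section \<open>Failure of o-minimality\<close>

lemma open_interval_left_neighbourhood:
  assumes trans: "\<And>x y z. x \<in> carrier M \<Longrightarrow> y \<in> carrier M \<Longrightarrow> z \<in> carrier M \<Longrightarrow>
      lt M x y \<Longrightarrow> lt M y z \<Longrightarrow> lt M x z"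
    and no_least: "\<And>x. x \<in> carrier M \<Longrightarrow> \<exists>a\<in>carrier M. lt M a x"
    and I: "open_interval M I" and x: "x \<in> I"
  shows "\<exists>a\<in>carrier M. lt M a x \<and> {y \<in> carrier M. lt M a y \<and> lt M y x} \<subseteq> I"
  using I unfolding open_interval_def
proof (elim disjE bexE)
  fix a b
  assume "a \<in> carrier M" "b \<in> carrier M" and I: "I = {x \<in> carrier M. lt M a x \<and> lt M x b}"
  then show ?thesis using x trans[of _ x b] by blast
next
  fix a assume "a \<in> carrier M" and I: "I = {x \<in> carrier M. lt M a x}"
  then show ?thesis using x by blast
next
  fix b assume "b \<in> carrier M" and I: "I = {x \<in> carrier M. lt M x b}"
  then show ?thesis using x no_least[of x] trans[of _ x b] by blast
next
  assume "I = carrier M"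
  then show ?thesis using x no_least[of x] by blast
qed

lemma infinite_left_discrete_not_o_minimal:
  assumes trans: "\<And>x y z. x \<in> carrier M \<Longrightarrow> y \<in> carrier M \<Longrightarrow> z \<in> carrier M \<Longrightarrow>
      lt M x y \<Longrightarrow> lt M y z \<Longrightarrow> lt M x z"
    and no_least: "\<And>x. x \<in> carrier M \<Longrightarrow> \<exists>a\<in>carrier M. lt M a x"
    and "definable_set M X" "infinite X"
    and left_discrete: "\<And>x a. x \<in> X \<Longrightarrow> a \<in> carrier M \<Longrightarrow> lt M a x \<Longrightarrow>
      \<exists>y\<in>carrier M. lt M a y \<and> lt M y x \<and> y \<notin> X"
  shows "\<not> o_minimal M"
proof
  assume "o_minimal M"
  then obtain S where S: "finite S" "X = \<Union>S"
    and pieces: "\<forall>I\<in>S. open_interval M I \<or> (\<exists>a\<in>carrier M. I = {a})"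
    using \<open>definable_set M X\<close> unfolding o_minimal_def by blast
  have "finite I" if "I \<in> S" for I
  proof (cases "open_interval M I")
    case True
    have "I = {}"
    proof (rule ccontr)
      assume "I \<noteq> {}"
      then obtain x where "x \<in> I" by blast
      have "\<exists>a\<in>carrier M. lt M a x \<and> {y \<in> carrier M. lt M a y \<and> lt M y x} \<subseteq> I"
        by (rule open_interval_left_neighbourhood[OF trans no_least True \<open>x \<in> I\<close>])
      then obtain a where "a \<in> carrier M" "lt M a x"
        and nbhd: "{y \<in> carrier M. lt M a y \<and> lt M y x} \<subseteq> I" by blast
      moreover have "x \<in> X" using \<open>x \<in> I\<close> that S(2) by blast
      ultimately obtain y where "y \<in> carrier M" "lt M a y" "lt M y x" "y \<notin> X"
        using left_discrete by blast
      then show False using nbhd that S(2) by blast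
    qed
    then show ?thesis by simp
  next
    case False
    then show ?thesis using pieces that by auto
  qed
  then show False using S \<open>infinite X\<close> by simp
qed

lemma of_nat_not_strictly_between:
  fixes q :: "'a::linordered_idom"
  assumes "of_nat k - 1 < q" "q < of_nat k"
  shows "q \<notin> range of_nat"
proof
  assume "q \<in> range of_nat"
  then obtain j where q: "q = of_nat j" by blast
  then have "of_nat k < (of_nat (Suc j) :: 'a)" using assms(1) by simp
  then have "k < Suc j" by (simp only: of_nat_less_iff)
  moreover have "j < k" using assms(2) q by simp
  ultimately show False by simp
qed

locale Qn_ultraproduct = nonprincipal_uf

sublocale Qn_ultraproduct \<subseteq> full_ultraproduct F Qn
  by unfold_locales simp

context Qn_ultraproduct
begin

lemma lt_G_trans:
  assumes "x \<in> carrier G" "y \<in> carrier G" "z \<in> carrier G" "lt G x y" "lt G y z"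
  shows "lt G x z"
proof -
  obtain f g h where "x = cls f" "y = cls g" "z = cls h"
    using assms(1-3) unfolding carrier_G by blast
  moreover have "{n. f n < h n} \<in> F" if "{n. f n < g n} \<in> F" "{n. g n < h n} \<in> F"
    using that by (rule uf_Collect_mono2) (rule less_trans)
  ultimately show ?thesis using assms(4,5) by (simp add: lt_cls)
qed

lemma lt_G_no_least: "x \<in> carrier G \<Longrightarrow> \<exists>a\<in>carrier G. lt G a x"
proof -
  assume "x \<in> carrier G"
  then obtain f where "x = cls f" unfolding carrier_G by blast
  moreover have "lt G (cls (\<lambda>n. f n - 1)) (cls f)"
    using uf_UNIV by (simp add: lt_cls)
  ultimately show ?thesis by (auto simp: carrier_G)
qed

lemma definable_pred_G: "definable_set G (pred G)"
proof -
  have "pred G = {x \<in> carrier G. sat G ((\<lambda>_. zer G)(0 := x)) (Pr (Var 0))}"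
    using pred_G_subset by auto
  moreover have "\<forall>i. (\<lambda>_. zer G) i \<in> carrier G" by (simp add: zer_G carrier_G)
  ultimately show ?thesis
    unfolding definable_set_def
    by (intro exI[of _ "Pr (Var 0)"] exI[of _ 0] exI[of _ "\<lambda>_. zer G"]) simp
qed

lemma infinite_pred_G: "infinite (pred G)"
proof -
  define c where "c k = cls (\<lambda>n. of_nat k)" for k :: nat
  have "c k \<in> pred G" for k
  proof -
    have "{n. k \<le> n} \<in> F" using uf_cofinite[of "{..<k}"] by (simp add: Compl_eq not_less)
    then show ?thesis unfolding c_def pred_cls by (auto elim: uf_Collect_mono)
  qed
  moreover have "inj c"
  proof
    fix k k' assume "c k = c k'"
    then have "{n. (of_nat k :: rat) = of_nat k'} \<in> F" unfolding c_def cls_eq_iff .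
    then show "k = k'" using uf_empty by (auto split: if_splits)
  qed
  ultimately show ?thesis
    using infinite_super[OF _ range_inj_infinite[OF \<open>inj c\<close>]] by blast
qed

lemma pred_G_left_discrete:
  assumes "x \<in> pred G" "a \<in> carrier G" "lt G a x"
  shows "\<exists>y\<in>carrier G. lt G a y \<and> lt G y x \<and> y \<notin> pred G"
proof -
  obtain f g where x: "x = cls f" and a: "a = cls g"
    using assms(1,2) pred_G_subset unfolding carrier_G by blast
  have nat_f: "{n. f n \<in> of_nat ` {0..n}} \<in> F" using assms(1) x pred_cls by simp
  have below: "{n. g n < f n} \<in> F" using assms(3) x a lt_cls by simp
  define h where "h n = max (f n - 1/2) ((g n + f n) / 2)" for n
  have "{n. g n < h n} \<in> F" "{n. h n < f n} \<in> F"
    using below by (auto simp: h_def less_max_iff_disj elim!: uf_Collect_mono)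
  moreover have "cls h \<notin> pred G"
  proof
    assume "cls h \<in> pred G"
    then have "{n. h n \<in> of_nat ` {0..n}} \<in> F" by (simp add: pred_cls)
    with nat_f below
    have "{n. h n \<in> of_nat ` {0..n} \<and> f n \<in> of_nat ` {0..n} \<and> g n < f n} \<in> F"
      by (simp add: uf_conj)
    then obtain n k where "h n \<in> range of_nat" "f n = of_nat k" "g n < f n"
      using uf_nonempty by blast
    moreover have "of_nat k - 1 < h n" "h n < of_nat k"
      using \<open>g n < f n\<close> \<open>f n = of_nat k\<close> by (auto simp: h_def)
    ultimately show False using of_nat_not_strictly_between by blast
  qed
  ultimately show ?thesis
    using a x by (intro bexI[of _ "cls h"]) (auto simp: lt_cls carrier_G)
qed

end

theorem mainTheorem6:
  assumes "nonprincipal_ultrafilter F"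
  shows "satisfies_DCI (ultraproduct F Qn) \<and> \<not> o_minimal (ultraproduct F Qn)"
proof -
  interpret Qn_ultraproduct F by unfold_locales (rule assms)
  have "satisfies_DCI G"
    by (rule satisfies_DCI_ultraproduct) (rule definable_cuts_have_max_Qn)
  moreover have "\<not> o_minimal G"
    by (rule infinite_left_discrete_not_o_minimal[OF lt_G_trans lt_G_no_least definable_pred_G
          infinite_pred_G pred_G_left_discrete])
  ultimately show ?thesis by blast
qed

end
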